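(* Let $\Pi_q$ be a projective plane (not necessarily Desarguesian) of order $q\ge 2$, and let $s(2,q)$ denote the smallest size of a saturating set in $\Pi_q$. Then \[ s(2,q)\leq 2\sqrt{(q+1)\ln (q+1)}+2 . \]
   Context: A point set $S\subset \Pi_q$ is saturating if every point of $\Pi_q\setminus S$ is collinear with two points of $S$. Here $\ln$ denotes the natural logarithm. *)

theory Defs
  imports Complex_Main
begin

definition projective_plane :: "'a set \<Rightarrow> 'a set set \<Rightarrow> bool" where
  "projective_plane P L \<longleftrightarrow>
     (\<forall>l\<in>L. l \<subseteq> P) \<and>
     (\<forall>x\<in>P. \<forall>y\<in>P. x \<noteq> y \<longrightarrow> (\<exists>!l. l \<in> L \<and> x \<in> l \<and> y \<in> l)) \<and>
     (\<forall>l\<in>L. \<forall>m\<in>L. l \<noteq> m \<longrightarrow> (\<exists>!x. x \<in> P \<and> x \<in> l \<and> x \<in> m)) \<and>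
     (\<exists>Q. Q \<subseteq> P \<and> card Q = 4 \<and>
        (\<forall>l\<in>L. card (Q \<inter> l) \<le> 2))"

definition projective_plane_of_order :: "'a set \<Rightarrow> 'a set set \<Rightarrow> nat \<Rightarrow> bool" where
  "projective_plane_of_order P L q \<longleftrightarrow>
     projective_plane P L \<and> finite P \<and> (\<forall>l\<in>L. card l = q + 1)"

definition saturating :: "'a set \<Rightarrow> 'a set set \<Rightarrow> 'a set \<Rightarrow> bool" where
  "saturating P L S \<longleftrightarrow> S \<subseteq> P \<and>
     (\<forall>x\<in>P - S. \<exists>a\<in>S. \<exists>b\<in>S. a \<noteq> b \<and> (\<exists>l\<in>L. x \<in> l \<and> a \<in> l \<and> b \<in> l))"

definition min_saturating_size :: "'a set \<Rightarrow> 'a set set \<Rightarrow> nat" where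
  "min_saturating_size P L = Min (card ` {S. saturating P L S})"

end

theory Submission
  imports Defs
begin

text \<open>A saturating set is built greedily. Call a point uncovered by S if it lies outside S and
on no secant of S. An uncovered point x becomes covered by adding p exactly when p lies on one of the
card S lines joining x to S, which together contain 1 + card S * q points. Double counting over
all candidates p shows that some p shrinks the number of uncovered points by the factor
1 - i (q - 1) / (q (q + 1)), where i = card S. Bounding the product of these factors by an exponential,
after floor(2 sqrt((q + 1) ln (q + 1))) + 2 steps fewer than one of the at most q^2 + q + 1 points
remains uncovered. If that number of steps exceeds q + 1, a line together with a point off it is a
saturating set that is small enough.\<close>

lemma sum_of_nat_lessThan_real: "(\<Sum>i<k. real i) = real k * (real k - 1) / 2"
  by (induction k) (auto simp: field_simps)

lemma prod_one_minus_le_exp_neg_sum: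
  fixes b :: "'a \<Rightarrow> real"
  assumes "\<And>i. i \<in> A \<Longrightarrow> b i \<le> 1"
  shows "(\<Prod>i\<in>A. 1 - b i) \<le> exp (- (\<Sum>i\<in>A. b i))"
proof -
  have "(\<Prod>i\<in>A. 1 - b i) \<le> (\<Prod>i\<in>A. exp (- b i))"
    using assms exp_ge_add_one_self[of "- b _"] by (intro prod_mono) auto
  also have "\<dots> = exp (- (\<Sum>i\<in>A. b i))"
    by (cases "finite A") (simp_all add: exp_sum flip: sum_negf)
  finally show ?thesis .
qed

lemma ln_square_plus_one_le:
  fixes Q :: real
  assumes "Q \<ge> 0"
  shows "ln (Q\<^sup>2 + Q + 1) \<le> 2 * ln (Q + 1) - Q / (Q + 1)\<^sup>2"
proof -
  have m: "(Q + 1)\<^sup>2 > 0" using assms by simp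
  have ratio: "(Q\<^sup>2 + Q + 1) / (Q + 1)\<^sup>2 = 1 - Q / (Q + 1)\<^sup>2"
    using m by (simp add: field_simps power2_eq_square)
  have pos: "Q\<^sup>2 + Q + 1 > 0" using assms by (simp add: add_pos_nonneg add_nonneg_pos)
  have "ln (Q\<^sup>2 + Q + 1) = ln ((Q + 1)\<^sup>2) + ln ((Q\<^sup>2 + Q + 1) / (Q + 1)\<^sup>2)"
    using m pos by (simp add: ln_div)
  also have "\<dots> \<le> 2 * ln (Q + 1) + ((Q\<^sup>2 + Q + 1) / (Q + 1)\<^sup>2 - 1)"
    using m pos assms by (intro add_mono ln_le_minus_one) (auto simp: ln_realpow)
  finally show ?thesis unfolding ratio by simp
qed

definition greedy_rate :: "nat \<Rightarrow> nat \<Rightarrow> real" where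
  "greedy_rate q i = real i * (real q - 1) / (real q * (real q + 1))"

lemma sum_greedy_rate:
  "(\<Sum>i<k. greedy_rate q i) = (real q - 1) * real k * (real k - 1) / (2 * real q * (real q + 1))"
proof -
  have "(\<Sum>i<k. greedy_rate q i) = (\<Sum>i<k. real i) * (real q - 1) / (real q * (real q + 1))"
    unfolding greedy_rate_def by (simp add: sum_divide_distrib sum_distrib_right)
  also have "\<dots> = (real q - 1) * real k * (real k - 1) / (2 * real q * (real q + 1))"
    by (simp add: sum_of_nat_lessThan_real field_simps)
  finally show ?thesis .
qed

lemma greedy_rate_le_one:
  assumes "q \<ge> 1" "i \<le> q + 1"
  shows "greedy_rate q i \<le> 1"
proof -
  have "real i * (real q - 1) \<le> (real q + 1) * (real q - 1)"
    using assms by (intro mult_right_mono) auto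
  also have "\<dots> \<le> real q * (real q + 1)" by (simp add: algebra_simps)
  finally show ?thesis unfolding greedy_rate_def using assms by (simp add: divide_le_eq)
qed

lemma greedy_ratio_le:
  assumes "q \<ge> 1" and "N \<le> real q * real q + real q + 1" and "real i < N"
  shows "N - 1 - real i * real q \<le> (1 - greedy_rate q i) * (N - real i)"
proof -
  have d: "real q * (real q + 1) > 0" using assms(1) by simp
  have "real i * (real q - 1) * (1 - real i) \<le> 0"
    using assms(1) by (cases "i = 0") (auto intro: mult_nonneg_nonpos)
  hence "greedy_rate q i * (real q * real q + real q + 1 - real i) \<le> 1 + real i * (real q - 1)"
    using d unfolding greedy_rate_def by (simp add: field_simps)
  moreover have "greedy_rate q i * (N - real i) \<le> greedy_rate q i * (real q * real q + real q + 1 - real i)"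
    using assms unfolding greedy_rate_def by (intro mult_left_mono) auto
  ultimately show ?thesis by (simp add: algebra_simps)
qed

text \<open>Only the boundary case j + 1 = q needs the correction term, which comes from the
second-order term of ln (q^2 + q + 1) below 2 ln (q + 1).\<close>

lemma consecutive_product_lower_bound:
  fixes j q :: nat
  assumes "j < q"
  shows "real q * (real j + 1)\<^sup>2 - 2 * (real q)\<^sup>2 / (real q + 1) \<le> (real q - 1) * (real j + 1) * (real j + 2)"
proof (cases "j + 2 \<le> q")
  case True
  hence "(real j + 1) * (real j + 2) \<le> (real j + 1) * real q" by (intro mult_left_mono) auto
  hence "real q * (real j + 1)\<^sup>2 \<le> (real q - 1) * (real j + 1) * (real j + 2)"
    by (simp add: power2_eq_square algebra_simps)
  moreover have "2 * (real q)\<^sup>2 / (real q + 1) \<ge> 0" by simp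
  ultimately show ?thesis by linarith
next
  case False
  hence q: "real q = real j + 1" using assms by simp
  have "real q \<le> 2 * (real q)\<^sup>2 / (real q + 1)"
    using q by (simp add: field_simps power2_eq_square)
  thus ?thesis unfolding q by (simp add: power2_eq_square algebra_simps)
qed

lemma plane_size_mult_greedy_product_lt_one:
  fixes q :: nat and K :: real
  assumes q: "q \<ge> 2" and K: "K = 2 * sqrt ((real q + 1) * ln (real q + 1))" and "K < real q"
  shows "(real q * real q + real q + 1) * (\<Prod>i<nat \<lfloor>K\<rfloor> + 2. 1 - greedy_rate q i) < 1"
proof -
  define j where "j = nat \<lfloor>K\<rfloor>"
  define n where "n = real q * real q + real q + 1"
  have K_nonneg: "K \<ge> 0" unfolding K using q by simp
  have j: "real j \<le> K" "K < real j + 1" unfolding j_def using K_nonneg by (simp_all add: of_nat_nat)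
  have "j < q" using j \<open>K < real q\<close> by linarith
  have K_sq: "K\<^sup>2 = 4 * (real q + 1) * ln (real q + 1)"
    unfolding K using q by (simp add: power_mult_distrib)
  have "K\<^sup>2 < (real j + 1)\<^sup>2" using j K_nonneg by (intro power_strict_mono) auto
  have qm: "real q * (real q + 1) > 0" using q by simp
  have "2 * real q * (real q + 1) * ln n
          \<le> 2 * real q * (real q + 1) * (2 * ln (real q + 1) - real q / (real q + 1)\<^sup>2)"
    using ln_square_plus_one_le[of "real q"] qm unfolding n_def
    by (intro mult_left_mono) (auto simp: power2_eq_square)
  also have "\<dots> = real q * K\<^sup>2 - 2 * (real q)\<^sup>2 / (real q + 1)"
    using qm unfolding K_sq by (simp add: field_simps power2_eq_square)
  also have "\<dots> < real q * (real j + 1)\<^sup>2 - 2 * (real q)\<^sup>2 / (real q + 1)"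
    using \<open>K\<^sup>2 < (real j + 1)\<^sup>2\<close> q by simp
  also have "\<dots> \<le> (real q - 1) * (real j + 1) * (real j + 2)"
    using consecutive_product_lower_bound[OF \<open>j < q\<close>] .
  finally have "ln n < (\<Sum>i<j + 2. greedy_rate q i)"
    unfolding sum_greedy_rate using qm by (simp add: field_simps)
  have "n > 0" unfolding n_def by (simp add: add_nonneg_pos)
  have "(\<Prod>i<j + 2. 1 - greedy_rate q i) \<le> exp (- (\<Sum>i<j + 2. greedy_rate q i))"
    using \<open>j < q\<close> q by (intro prod_one_minus_le_exp_neg_sum greedy_rate_le_one) auto
  also have "\<dots> < exp (- ln n)" using \<open>ln n < (\<Sum>i<j + 2. greedy_rate q i)\<close> by simp
  also have "\<dots> = 1 / n" using \<open>n > 0\<close> by (simp add: exp_minus inverse_eq_divide)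
  finally show ?thesis using \<open>n > 0\<close> unfolding n_def j_def by (simp add: field_simps)
qed

lemma ex_le_average:
  fixes f :: "'a \<Rightarrow> real"
  assumes "finite A" "A \<noteq> {}"
  shows "\<exists>a\<in>A. real (card A) * f a \<le> (\<Sum>x\<in>A. f x)"
proof -
  define a where "a = arg_min_on f A"
  have "a \<in> A" "\<And>x. x \<in> A \<Longrightarrow> f a \<le> f x"
    using arg_min_if_finite[OF assms, of f] unfolding a_def by (auto simp: not_less)
  thus ?thesis using sum_bounded_below[of A "f a" f] by blast
qed

locale finite_projective_plane =
  fixes P :: "'a set" and L :: "'a set set" and q :: nat
  assumes plane_of_order: "projective_plane_of_order P L q"
begin

lemma finite_points: "finite P"
  using plane_of_order by (simp add: projective_plane_of_order_def)

lemma line_subset_points: "l \<in> L \<Longrightarrow> l \<subseteq> P"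
  using plane_of_order by (auto simp: projective_plane_of_order_def projective_plane_def)

lemma card_line: "l \<in> L \<Longrightarrow> card l = q + 1"
  using plane_of_order by (simp add: projective_plane_of_order_def)

lemma finite_line: "l \<in> L \<Longrightarrow> finite l"
  using card_line by (metis card.infinite nat.simps(3) Suc_eq_plus1)

lemma ex1_line_through:
  "x \<in> P \<Longrightarrow> y \<in> P \<Longrightarrow> x \<noteq> y \<Longrightarrow> \<exists>!l. l \<in> L \<and> x \<in> l \<and> y \<in> l"
  using plane_of_order by (simp add: projective_plane_of_order_def projective_plane_def)

lemma lines_meet: "l \<in> L \<Longrightarrow> m \<in> L \<Longrightarrow> l \<noteq> m \<Longrightarrow> \<exists>x\<in>P. x \<in> l \<and> x \<in> m"
  using plane_of_order unfolding projective_plane_of_order_def projective_plane_def by metis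

definition join :: "'a \<Rightarrow> 'a \<Rightarrow> 'a set" where
  "join x y = (THE l. l \<in> L \<and> x \<in> l \<and> y \<in> l)"

lemma join: "x \<in> P \<Longrightarrow> y \<in> P \<Longrightarrow> x \<noteq> y \<Longrightarrow> join x y \<in> L \<and> x \<in> join x y \<and> y \<in> join x y"
  unfolding join_def by (rule theI', rule ex1_line_through)

lemma line_eq_join:
  "x \<in> P \<Longrightarrow> y \<in> P \<Longrightarrow> x \<noteq> y \<Longrightarrow> l \<in> L \<Longrightarrow> x \<in> l \<Longrightarrow> y \<in> l \<Longrightarrow> l = join x y"
  using join ex1_line_through by blast

lemma card_join_remove:
  "x \<in> P \<Longrightarrow> y \<in> P \<Longrightarrow> x \<noteq> y \<Longrightarrow> card (join x y - {x}) = q"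
  using join[of x y] card_line finite_line by (simp add: card_Diff_singleton)

lemma ex_triangle: "\<exists>a\<in>P. \<exists>b\<in>P. \<exists>c\<in>P. a \<noteq> b \<and> c \<notin> join a b"
proof -
  obtain Q where Q: "Q \<subseteq> P" "card Q = 4" "\<forall>l\<in>L. card (Q \<inter> l) \<le> 2"
    using plane_of_order by (auto simp: projective_plane_of_order_def projective_plane_def)
  obtain a b c d where abc: "Q = {a, b, c, d}" "a \<noteq> b" "a \<noteq> c" "b \<noteq> c"
    using Q(2) by (auto simp: card_Suc_eq numeral_eq_Suc)
  have P: "a \<in> P" "b \<in> P" "c \<in> P" using Q(1) abc by auto
  have l: "join a b \<in> L" "a \<in> join a b" "b \<in> join a b" using join P abc by auto
  have "c \<notin> join a b"
  proof
    assume "c \<in> join a b"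
    hence "{a, b, c} \<subseteq> Q \<inter> join a b" using abc l by auto
    hence "card {a, b, c} \<le> card (Q \<inter> join a b)" by (intro card_mono) (use finite_line l in auto)
    with abc Q(3) l show False by auto
  qed
  thus ?thesis using P abc by blast
qed

lemma ex_line_and_point_off: "\<exists>l\<in>L. \<exists>c\<in>P. c \<notin> l"
  using ex_triangle join by blast

lemma order_ge_one: "q \<ge> 1"
proof -
  obtain a b where ab: "a \<in> P" "b \<in> P" "a \<noteq> b" using ex_triangle by blast
  hence "card {a, b} \<le> card (join a b)" using join finite_line by (intro card_mono) auto
  thus ?thesis using ab join card_line by fastforce
qed

lemma saturating_line_insert_point:
  assumes l: "l \<in> L" and c: "c \<in> P" "c \<notin> l"
  shows "saturating P L (insert c l)"
  unfolding saturating_def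
proof (intro conjI ballI)
  show "insert c l \<subseteq> P" using c l line_subset_points by auto
next
  fix x assume x: "x \<in> P - insert c l"
  have xc: "join x c \<in> L" "x \<in> join x c" "c \<in> join x c" using join[of x c] x c by auto
  then obtain z where z: "z \<in> join x c" "z \<in> l" using lines_meet[OF _ l, of "join x c"] c by blast
  hence "z \<noteq> c" using c by auto
  thus "\<exists>a\<in>insert c l. \<exists>b\<in>insert c l. a \<noteq> b \<and> (\<exists>m\<in>L. x \<in> m \<and> a \<in> m \<and> b \<in> m)"
    using z xc by blast
qed

lemma card_points_le: "card P \<le> q * q + q + 1"
proof -
  obtain l c where l: "l \<in> L" and c: "c \<in> P" "c \<notin> l" using ex_line_and_point_off by blast
  have z: "z \<in> P" "z \<noteq> c" if "z \<in> l" for z using that l c line_subset_points by auto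
  have cover: "P \<subseteq> insert c (\<Union>z\<in>l. join c z - {c})"
  proof
    fix y assume y: "y \<in> P"
    show "y \<in> insert c (\<Union>z\<in>l. join c z - {c})"
    proof (cases "y = c")
      case False
      have cy: "join c y \<in> L" "c \<in> join c y" "y \<in> join c y" using join y c False by auto
      then obtain z where "z \<in> join c y" "z \<in> l" using lines_meet[OF _ l, of "join c y"] c by blast
      hence "join c y = join c z" using line_eq_join[of c z] z cy c by auto
      thus ?thesis using \<open>z \<in> l\<close> cy False by auto
    qed simp
  qed
  have "card P \<le> card (insert c (\<Union>z\<in>l. join c z - {c}))"
    using z join[of c] c finite_line l by (intro card_mono[OF _ cover]) blast+
  also have "\<dots> \<le> Suc (card (\<Union>z\<in>l. join c z - {c}))" by (rule card_insert_le_m1) auto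
  also have "card (\<Union>z\<in>l. join c z - {c}) \<le> (\<Sum>z\<in>l. card (join c z - {c}))"
    by (rule card_UN_le) (use finite_line l in auto)
  also have "\<dots> = (\<Sum>z\<in>l. q)"
    using z c card_join_remove by (intro sum.cong) auto
  also have "\<dots> = (q + 1) * q" using card_line l by simp
  finally show ?thesis by (simp add: algebra_simps)
qed

lemma card_points_ge: "q + 2 \<le> card P"
proof -
  obtain l c where l: "l \<in> L" and c: "c \<in> P" "c \<notin> l" using ex_line_and_point_off by blast
  have "card (insert c l) \<le> card P"
    using l c line_subset_points finite_points by (intro card_mono) auto
  thus ?thesis using c finite_line[OF l] card_line[OF l] by simp
qed

lemma min_saturating_size_le: "saturating P L S \<Longrightarrow> min_saturating_size P L \<le> card S"
proof -
  assume S: "saturating P L S"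
  have "{S. saturating P L S} \<subseteq> Pow P" unfolding saturating_def by auto
  hence "finite {S. saturating P L S}" using finite_points by (simp add: finite_subset)
  thus ?thesis unfolding min_saturating_size_def using S by (intro Min_le) auto
qed

lemma min_saturating_size_le_order_plus_two: "min_saturating_size P L \<le> q + 2"
proof -
  obtain l c where l: "l \<in> L" and c: "c \<in> P" "c \<notin> l" using ex_line_and_point_off by blast
  have "min_saturating_size P L \<le> card (insert c l)"
    using saturating_line_insert_point[OF l c] by (rule min_saturating_size_le)
  thus ?thesis using c finite_line[OF l] card_line[OF l] by simp
qed

definition uncovered :: "'a set \<Rightarrow> 'a set" where
  "uncovered S = {x \<in> P - S. \<not> (\<exists>a\<in>S. \<exists>b\<in>S. a \<noteq> b \<and> (\<exists>l\<in>L. x \<in> l \<and> a \<in> l \<and> b \<in> l))}"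

definition pencil :: "'a set \<Rightarrow> 'a \<Rightarrow> 'a set" where
  "pencil S x = insert x (\<Union>s\<in>S. join x s)"

lemma saturating_if_uncovered_empty: "S \<subseteq> P \<Longrightarrow> uncovered S = {} \<Longrightarrow> saturating P L S"
  unfolding saturating_def uncovered_def by blast

lemma finite_uncovered: "finite (uncovered S)"
  unfolding uncovered_def using finite_points by auto

lemma uncovered_insert:
  assumes S: "S \<subseteq> P" and p: "p \<in> P" "p \<notin> S"
  shows "uncovered (insert p S) = {x \<in> uncovered S. p \<notin> pencil S x}"
proof (intro set_eqI iffI)
  fix x assume x: "x \<in> uncovered (insert p S)"
  hence xU: "x \<in> uncovered S" and "x \<noteq> p" unfolding uncovered_def by blast+
  have "p \<notin> pencil S x"
  proof
    assume "p \<in> pencil S x"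
    then obtain s where s: "s \<in> S" "p \<in> join x s" using \<open>x \<noteq> p\<close> unfolding pencil_def by auto
    have "x \<in> P" "x \<noteq> s" using xU s unfolding uncovered_def by auto
    hence "join x s \<in> L" "x \<in> join x s" "s \<in> join x s" using join S s by auto
    moreover have "s \<noteq> p" using s p by auto
    ultimately show False using x s unfolding uncovered_def by blast
  qed
  thus "x \<in> {x \<in> uncovered S. p \<notin> pencil S x}" using xU by blast
next
  fix x assume "x \<in> {x \<in> uncovered S. p \<notin> pencil S x}"
  hence xU: "x \<in> uncovered S" and pF: "p \<notin> pencil S x" by auto
  have x: "x \<in> P" "x \<notin> S" "x \<noteq> p" using xU pF unfolding uncovered_def pencil_def by auto
  have False if "b \<in> S" "l \<in> L" "x \<in> l" "p \<in> l" "b \<in> l" for b l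
  proof -
    have "l = join x b" using line_eq_join[of x b l] x that S by auto
    thus False using pF that unfolding pencil_def by auto
  qed
  thus "x \<in> uncovered (insert p S)" using xU x unfolding uncovered_def by blast
qed

lemma pencil_subset_points:
  assumes "S \<subseteq> P" "x \<in> uncovered S"
  shows "pencil S x \<subseteq> P"
proof -
  have x: "x \<in> P" "x \<notin> S" using assms(2) unfolding uncovered_def by auto
  have "join x s \<subseteq> P" if "s \<in> S" for s
    using join[of x s] line_subset_points x that assms(1) by auto
  thus ?thesis using x unfolding pencil_def by auto
qed

lemma subset_pencil:
  assumes "S \<subseteq> P" "x \<in> uncovered S"
  shows "S \<subseteq> pencil S x"
proof -
  have x: "x \<in> P" "x \<notin> S" using assms(2) unfolding uncovered_def by auto
  thus ?thesis using join[of x] assms(1) unfolding pencil_def by blast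
qed

lemma card_pencil:
  assumes S: "S \<subseteq> P" and x: "x \<in> uncovered S"
  shows "card (pencil S x) = 1 + card S * q"
proof -
  have x': "x \<in> P" "x \<notin> S" using x unfolding uncovered_def by auto
  have finS: "finite S" using S finite_points finite_subset by blast
  have js: "join x s \<in> L" "x \<in> join x s" "s \<in> join x s" if "s \<in> S" for s
    using join[of x s] that x' S by auto
  have disjoint: "(join x s - {x}) \<inter> (join x t - {x}) = {}" if "s \<in> S" "t \<in> S" "s \<noteq> t" for s t
  proof (rule ccontr)
    assume "(join x s - {x}) \<inter> (join x t - {x}) \<noteq> {}"
    then obtain y where y: "y \<in> join x s" "y \<in> join x t" "y \<noteq> x" by auto
    have "y \<in> P" using y(1) js(1) that(1) line_subset_points by blast
    hence "join x s = join x y" "join x t = join x y"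
      using line_eq_join[of x y] x'(1) y js that by auto
    hence "t \<in> join x s" using js(3)[OF that(2)] by simp
    hence "\<exists>a\<in>S. \<exists>b\<in>S. a \<noteq> b \<and> (\<exists>l\<in>L. x \<in> l \<and> a \<in> l \<and> b \<in> l)"
      using js[OF that(1)] that by blast
    thus False using x unfolding uncovered_def by blast
  qed
  define V where "V = (\<Union>s\<in>S. join x s - {x})"
  have "card V = (\<Sum>s\<in>S. card (join x s - {x}))"
    unfolding V_def using finS finite_line js disjoint by (intro card_UN_disjoint) auto
  also have "\<dots> = (\<Sum>s\<in>S. q)"
    using card_join_remove x' S by (intro sum.cong) (auto simp: subset_iff)
  finally have "card V = card S * q" by simp
  moreover have "pencil S x = insert x V" unfolding pencil_def V_def by auto
  moreover have "finite V" "x \<notin> V" unfolding V_def using finS finite_line js by auto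
  ultimately show ?thesis by simp
qed

lemma sum_card_uncovered_insert:
  assumes S: "S \<subseteq> P"
  shows "(\<Sum>p\<in>P - S. card (uncovered (insert p S)))
           = card (uncovered S) * (card P - (1 + card S * q))"
proof -
  let ?U = "uncovered S"
  have "(\<Sum>p\<in>P - S. card (uncovered (insert p S)))
          = (\<Sum>p\<in>P - S. \<Sum>x\<in>?U. of_bool (p \<notin> pencil S x))"
    using uncovered_insert[OF S] finite_uncovered by (intro sum.cong) (auto simp: Int_def)
  also have "\<dots> = (\<Sum>x\<in>?U. \<Sum>p\<in>P - S. of_bool (p \<notin> pencil S x))"
    by (rule sum.swap)
  also have "\<dots> = (\<Sum>x\<in>?U. card (P - pencil S x))"
  proof (intro sum.cong refl)
    fix x assume "x \<in> ?U"
    hence "(P - S) \<inter> {p. p \<notin> pencil S x} = P - pencil S x" using subset_pencil[OF S] by auto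
    thus "(\<Sum>p\<in>P - S. of_bool (p \<notin> pencil S x)) = card (P - pencil S x)"
      using finite_points by simp
  qed
  also have "\<dots> = (\<Sum>x\<in>?U. card P - (1 + card S * q))"
  proof (intro sum.cong refl)
    fix x assume x: "x \<in> ?U"
    have "finite (pencil S x)" using pencil_subset_points[OF S x] finite_points finite_subset by blast
    thus "card (P - pencil S x) = card P - (1 + card S * q)"
      using card_Diff_subset[OF _ pencil_subset_points[OF S x]] card_pencil[OF S x] by simp
  qed
  finally show ?thesis by simp
qed

lemma greedy_step:
  assumes S: "S \<subseteq> P" "card S \<le> q"
  shows "\<exists>p\<in>P - S. real (card (uncovered (insert p S)))
                      \<le> (1 - greedy_rate q (card S)) * real (card (uncovered S))"
proof -
  define i where "i = card S"
  define N where "N = real (card P)"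
  have "finite S" using S finite_points finite_subset by blast
  hence card_rest: "card (P - S) = card P - i" using S(1) by (simp add: card_Diff_subset i_def)
  have "i < card P" using S(2) card_points_ge unfolding i_def by linarith
  hence "P - S \<noteq> {}" using card_rest card_gt_0_iff[of "P - S"] by simp
  then obtain p where p: "p \<in> P - S"
    and avg: "real (card (P - S)) * real (card (uncovered (insert p S)))
                \<le> (\<Sum>p\<in>P - S. real (card (uncovered (insert p S))))"
    using ex_le_average[of "P - S" "\<lambda>p. real (card (uncovered (insert p S)))"] finite_points
    by blast
  have "N - real i > 0" using \<open>i < card P\<close> unfolding N_def by simp
  have "(\<Sum>p\<in>P - S. real (card (uncovered (insert p S))))
          = real (\<Sum>p\<in>P - S. card (uncovered (insert p S)))" by simp
  also have "\<dots> = real (card (uncovered S)) * real (card P - (1 + i * q))"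
    unfolding sum_card_uncovered_insert[OF S(1)] i_def by simp
  also have "\<dots> \<le> real (card (uncovered S)) * ((1 - greedy_rate q i) * (N - real i))"
  proof (intro mult_left_mono)
    have "N \<le> real q * real q + real q + 1" unfolding N_def using card_points_le
      by (metis of_nat_1 of_nat_add of_nat_mono of_nat_mult)
    hence "N - 1 - real i * real q \<le> (1 - greedy_rate q i) * (N - real i)"
      using greedy_ratio_le[OF order_ge_one] \<open>i < card P\<close> unfolding N_def by simp
    moreover have "0 \<le> (1 - greedy_rate q i) * (N - real i)"
      using greedy_rate_le_one[OF order_ge_one] S(2) \<open>N - real i > 0\<close> unfolding i_def by simp
    ultimately show "real (card P - (1 + i * q)) \<le> (1 - greedy_rate q i) * (N - real i)"
      unfolding N_def by (cases "1 + i * q \<le> card P") (auto simp: of_nat_diff)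
  qed simp
  finally have "(\<Sum>p\<in>P - S. real (card (uncovered (insert p S))))
                  \<le> (N - real i) * ((1 - greedy_rate q i) * real (card (uncovered S)))"
    by (simp add: mult_ac)
  moreover have "real (card (P - S)) = N - real i"
    using card_rest \<open>i < card P\<close> unfolding N_def by (simp add: of_nat_diff)
  ultimately have "(N - real i) * real (card (uncovered (insert p S)))
                     \<le> (N - real i) * ((1 - greedy_rate q i) * real (card (uncovered S)))"
    using avg by simp
  thus ?thesis using p \<open>N - real i > 0\<close> unfolding i_def by (meson mult_le_cancel_left_pos)
qed

lemma greedy_saturation:
  assumes "k \<le> q + 1"
  shows "\<exists>S\<subseteq>P. card S = k \<and>
           real (card (uncovered S)) \<le> real (card P) * (\<Prod>i<k. 1 - greedy_rate q i)"
  using assms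
proof (induction k)
  case 0
  have "uncovered {} = P" unfolding uncovered_def by auto
  thus ?case by auto
next
  case (Suc k)
  then obtain S where S: "S \<subseteq> P" "card S = k"
    and bound: "real (card (uncovered S)) \<le> real (card P) * (\<Prod>i<k. 1 - greedy_rate q i)"
    by auto
  obtain p where p: "p \<in> P - S"
    and step: "real (card (uncovered (insert p S))) \<le> (1 - greedy_rate q k) * real (card (uncovered S))"
    using greedy_step[OF S(1)] S(2) Suc.prems by auto
  have "0 \<le> 1 - greedy_rate q k" using greedy_rate_le_one[OF order_ge_one] Suc.prems by simp
  hence "real (card (uncovered (insert p S)))
           \<le> (1 - greedy_rate q k) * (real (card P) * (\<Prod>i<k. 1 - greedy_rate q i))"
    using step bound by (meson mult_left_mono order_trans)
  moreover have "card (insert p S) = Suc k"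
    using p S finite_subset[OF S(1) finite_points] by simp
  ultimately show ?case using p S(1) by (intro exI[of _ "insert p S"]) (auto simp: mult_ac)
qed

lemma min_saturating_size_le_greedy:
  assumes "k \<le> q + 1" and "(real q * real q + real q + 1) * (\<Prod>i<k. 1 - greedy_rate q i) < 1"
  shows "min_saturating_size P L \<le> k"
proof -
  obtain S where S: "S \<subseteq> P" "card S = k"
    and bound: "real (card (uncovered S)) \<le> real (card P) * (\<Prod>i<k. 1 - greedy_rate q i)"
    using greedy_saturation[OF assms(1)] by blast
  have "0 \<le> (\<Prod>i<k. 1 - greedy_rate q i)"
    using greedy_rate_le_one[OF order_ge_one] assms(1) by (intro prod_nonneg) auto
  moreover have "real (card P) \<le> real q * real q + real q + 1"
    using card_points_le by (metis of_nat_1 of_nat_add of_nat_mono of_nat_mult)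
  ultimately have "real (card P) * (\<Prod>i<k. 1 - greedy_rate q i) < 1"
    using assms(2) by (meson mult_right_mono order_le_less_trans)
  hence "card (uncovered S) = 0" using bound by linarith
  hence "uncovered S = {}" using finite_uncovered by simp
  hence "saturating P L S" using saturating_if_uncovered_empty S(1) by blast
  thus ?thesis using min_saturating_size_le S(2) by blast
qed

end

theorem theorem1:
  fixes P :: "'a set" and L :: "'a set set" and q :: nat
  assumes "projective_plane_of_order P L q" and "q \<ge> 2"
  shows "real (min_saturating_size P L)
           \<le> 2 * sqrt ((real q + 1) * ln (real q + 1)) + 2"
proof -
  interpret finite_projective_plane P L q using assms(1) by unfold_locales
  define K where "K = 2 * sqrt ((real q + 1) * ln (real q + 1))"
  show ?thesis
  proof (cases "K < real q")
    case True
    have "real (nat \<lfloor>K\<rfloor>) \<le> K" unfolding K_def using assms(2) by (simp add: of_nat_nat)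
    hence "nat \<lfloor>K\<rfloor> + 2 \<le> q + 1" using True by linarith
    hence "min_saturating_size P L \<le> nat \<lfloor>K\<rfloor> + 2"
      using plane_size_mult_greedy_product_lt_one[OF assms(2) K_def True]
      by (rule min_saturating_size_le_greedy)
    thus ?thesis using \<open>real (nat \<lfloor>K\<rfloor>) \<le> K\<close> unfolding K_def by linarith
  next
    case False
    thus ?thesis using min_saturating_size_le_order_plus_two unfolding K_def by linarith
  qed
qed

end
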